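(* Let $N\in\mathbb N$, $\nu>0$, and let $z_1^{(\nu-1)}>\dots>z_N^{(\nu-1)}>0$ be the zeros of the Laguerre polynomial $L_N^{(\nu-1)}$ (orthogonal with respect to $e^{-x}x^{\nu-1}$ on $]0,\infty[$). Let $r_i:=\sqrt{2z_i^{(\nu-1)}}$ and form $S=(s_{i,j})_{i,j=1,\dots,N}$ with $$s_{i,i}:=1+\frac{2\nu}{r_i^2}+2\sum_{l\ne i}(r_i-r_l)^{-2}+2\sum_{l\ne i}(r_i+r_l)^{-2},\qquad s_{i,j}:=2(r_i+r_j)^{-2}-2(r_i-r_j)^{-2}\ (i\ne j).$$ Then $\det S=N!\cdot 2^N$. *)

theory Defs
  imports "HOL-Computational_Algebra.Polynomial" "Jordan_Normal_Form.Determinant"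
begin

definition laguerre :: "nat \<Rightarrow> real \<Rightarrow> real poly" where
  "laguerre n a = (\<Sum>k\<le>n. monom ((-1)^k * ((real n + a) gchoose (n - k)) / fact k) k)"

definition S_mat :: "nat \<Rightarrow> real \<Rightarrow> (nat \<Rightarrow> real) \<Rightarrow> real mat" where
  "S_mat N \<nu> z = (let r = (\<lambda>i. sqrt (2 * z i)) in
     mat N N (\<lambda>(i,j).
       if i = j then
         1 + 2 * \<nu> / (r i)^2
           + 2 * (\<Sum>l\<in>{0..<N} - {i}. 1 / (r i - r l)^2)
           + 2 * (\<Sum>l\<in>{0..<N} - {i}. 1 / (r i + r l)^2)
       else 2 / (r i + r j)^2 - 2 / (r i - r j)^2))"

end

theory Submission
  imports Defs
begin

text \<open>
  Put r_i = sqrt (2 z_i) and let X = (r_i z_i^k)_{i,k}: a diagonal matrix times a Vandermonde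
  matrix with distinct nodes, hence invertible. Applying S to the column (r_j z_j^k)_j gives
  (r_i ((2k + 2) z_i^k + q_k(z_i)))_i with deg q_k < k, so S X = X B for an upper triangular B
  with diagonal entries 2k + 2, and det S = det B = 2^N N!. Besides distinctness and positivity,
  the row computation uses only the Stieltjes relations 2 z_i sum_{l ~= i} 1 / (z_i - z_l) = z_i - nu,
  which come from evaluating the Laguerre equation x y'' + (nu - x) y' + N y = 0 at the simple
  zero z_i.
\<close>

section \<open>Laguerre polynomials\<close>

lemma coeff_laguerre:
  "coeff (laguerre n a) k =
     (if k \<le> n then (-1) ^ k * ((real n + a) gchoose (n - k)) / fact k else 0)"
  by (simp add: laguerre_def coeff_sum coeff_monom)

lemma degree_laguerre: "degree (laguerre n a) = n"
proof (rule antisym)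
  show "degree (laguerre n a) \<le> n"
    by (rule degree_le) (simp add: coeff_laguerre)
  show "n \<le> degree (laguerre n a)"
    by (rule le_degree) (simp add: coeff_laguerre)
qed

lemma coeff_laguerre_Suc:
  "real (Suc k) * (real k + a + 1) * coeff (laguerre n a) (Suc k) =
     (real k - real n) * coeff (laguerre n a) k"
proof (cases "k < n")
  case True
  define m where "m = n - Suc k"
  have nk: "n - k = Suc m" "n - Suc k = m" and kn: "real k - real n = - real (Suc m)"
    and nm: "real n + a - real m = real k + a + 1"
    using True by (simp_all add: m_def of_nat_diff)
  have absorb: "real (Suc m) * ((real n + a) gchoose Suc m)
      = (real k + a + 1) * ((real n + a) gchoose m)"
    using gbinomial_absorption[of m "real n + a"] gbinomial_absorb_comp[of "real n + a" m]
    by (simp only: nm)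
  have "real (Suc k) * (real k + a + 1) * coeff (laguerre n a) (Suc k)
      = - ((-1) ^ k * ((real k + a + 1) * ((real n + a) gchoose m)) / fact k)"
    using True by (simp add: coeff_laguerre nk field_simps del: of_nat_Suc)
  also have "\<dots> = (real k - real n) * coeff (laguerre n a) k"
    using True by (simp add: coeff_laguerre kn nk flip: absorb) (simp add: field_simps)
  finally show ?thesis .
next
  case False
  then show ?thesis
    by (cases "k = n") (simp_all add: coeff_laguerre)
qed

lemma laguerre_ode:
  "[:0, 1:] * pderiv (pderiv (laguerre n a)) + [:a + 1, -1:] * pderiv (laguerre n a)
     + smult (real n) (laguerre n a) = 0"
proof (rule poly_eqI)
  fix k
  show "coeff ([:0, 1:] * pderiv (pderiv (laguerre n a)) + [:a + 1, -1:] * pderiv (laguerre n a)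
     + smult (real n) (laguerre n a)) k = coeff 0 k"
    using coeff_laguerre_Suc[of k a n]
    by (cases k) (simp_all add: coeff_pderiv algebra_simps)
qed

section \<open>Polynomials with simple roots and the Stieltjes relations\<close>

lemma poly_pderiv_prod_linear:
  fixes z :: "'b \<Rightarrow> 'a::field"
  assumes "finite A" and "\<And>l. l \<in> A \<Longrightarrow> z l \<noteq> x"
  shows "poly (pderiv (\<Prod>l\<in>A. [:- z l, 1:])) x =
           (\<Prod>l\<in>A. x - z l) * (\<Sum>l\<in>A. 1 / (x - z l))"
  using assms
proof (induction A rule: finite_induct)
  case (insert j A)
  let ?q = "\<Prod>l\<in>A. [:- z l, 1:]"
  have "x - z j \<noteq> 0" using insert.prems by auto
  have "poly (pderiv (\<Prod>l\<in>insert j A. [:- z l, 1:])) x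
      = poly ([:- z j, 1:] * pderiv ?q + ?q * pderiv [:- z j, 1:]) x"
    by (simp only: prod.insert[OF insert.hyps] pderiv_mult)
  also have "\<dots> = (x - z j) * poly (pderiv ?q) x + poly ?q x"
    by (simp add: pderiv_pCons algebra_simps)
  also have "\<dots> = (x - z j) * ((\<Prod>l\<in>A. x - z l) * (\<Sum>l\<in>A. 1 / (x - z l)))
      + (\<Prod>l\<in>A. x - z l)"
    using insert by (simp add: poly_prod)
  also have "\<dots> = (\<Prod>l\<in>insert j A. x - z l) * (\<Sum>l\<in>insert j A. 1 / (x - z l))"
    using insert.hyps \<open>x - z j \<noteq> 0\<close> by (simp add: field_simps)
  finally show ?case .
qed simp

lemma poly_pderiv_prod_linear_at_root:
  fixes z :: "'b \<Rightarrow> 'a::field"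
  assumes "finite A" and "inj_on z A" and "i \<in> A"
  shows "poly (pderiv (pderiv (\<Prod>l\<in>A. [:- z l, 1:]))) (z i) =
           2 * poly (pderiv (\<Prod>l\<in>A. [:- z l, 1:])) (z i) * (\<Sum>l\<in>A - {i}. 1 / (z i - z l))"
    and "poly (pderiv (\<Prod>l\<in>A. [:- z l, 1:])) (z i) \<noteq> 0"
proof -
  define q where "q = (\<Prod>l\<in>A - {i}. [:- z l, 1:])"
  have factor: "(\<Prod>l\<in>A. [:- z l, 1:]) = [:- z i, 1:] * q"
    unfolding q_def using assms(1,3) by (rule prod.remove)
  have distinct: "\<And>l. l \<in> A - {i} \<Longrightarrow> z l \<noteq> z i"
    using assms(2,3) by (auto dest: inj_onD)
  have q_nonzero: "poly q (z i) \<noteq> 0"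
    using distinct assms(1) by (force simp: q_def poly_prod)
  have d1: "poly (pderiv (\<Prod>l\<in>A. [:- z l, 1:])) (z i) = poly q (z i)"
    by (simp add: factor pderiv_mult pderiv_diff pderiv_smult pderiv_pCons)
  have d2: "poly (pderiv (pderiv (\<Prod>l\<in>A. [:- z l, 1:]))) (z i) = 2 * poly (pderiv q) (z i)"
    by (simp add: factor pderiv_mult pderiv_add pderiv_diff pderiv_smult pderiv_pCons)
  have "poly (pderiv q) (z i) = poly q (z i) * (\<Sum>l\<in>A - {i}. 1 / (z i - z l))"
    using poly_pderiv_prod_linear[of "A - {i}" z "z i"] distinct assms(1)
    by (simp add: q_def poly_prod)
  with d1 d2 q_nonzero
  show "poly (pderiv (pderiv (\<Prod>l\<in>A. [:- z l, 1:]))) (z i) =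
           2 * poly (pderiv (\<Prod>l\<in>A. [:- z l, 1:])) (z i) * (\<Sum>l\<in>A - {i}. 1 / (z i - z l))"
    and "poly (pderiv (\<Prod>l\<in>A. [:- z l, 1:])) (z i) \<noteq> 0"
    by simp_all
qed

lemma eq_smult_prod_linear_if_roots:
  fixes p :: "'a::idom poly"
  assumes "finite A" and "inj_on z A" and "degree p = card A"
    and "\<And>l. l \<in> A \<Longrightarrow> poly p (z l) = 0"
  shows "p = smult (lead_coeff p) (\<Prod>l\<in>A. [:- z l, 1:])"
proof (rule poly_eqI_degree_lead_coeff)
  have deg: "degree (\<Prod>l\<in>A. [:- z l, 1:]) = card A"
    by (simp add: degree_prod_eq_sum_degree)
  moreover have "coeff (\<Prod>l\<in>A. [:- z l, 1:]) (card A) = 1"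
    using lead_coeff_prod[of "\<lambda>l. [:- z l, 1:]" A] by (simp add: deg)
  ultimately show
    "coeff p (card A) = coeff (smult (lead_coeff p) (\<Prod>l\<in>A. [:- z l, 1:])) (card A)"
    and "degree (smult (lead_coeff p) (\<Prod>l\<in>A. [:- z l, 1:])) \<le> card A"
    using assms(3) by simp_all
  show "card A \<le> card (z ` A)" and "degree p \<le> card A"
    using assms(2,3) by (simp_all add: card_image)
  show "poly p x = poly (smult (lead_coeff p) (\<Prod>l\<in>A. [:- z l, 1:])) x"
    if "x \<in> z ` A" for x
    using that assms(1,4) by (auto simp: poly_prod)
qed

lemma laguerre_roots_stieltjes:
  assumes "finite A" and "inj_on z A" and "card A = n"
    and "\<And>l. l \<in> A \<Longrightarrow> poly (laguerre n a) (z l) = 0" and "i \<in> A"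
  shows "2 * z i * (\<Sum>l\<in>A - {i}. 1 / (z i - z l)) = z i - (a + 1)"
proof -
  let ?q = "\<Prod>l\<in>A. [:- z l, 1:]"
  define c where "c = lead_coeff (laguerre n a)"
  have "c \<noteq> 0"
    by (simp add: c_def degree_laguerre coeff_laguerre)
  have factor: "laguerre n a = smult c ?q"
    unfolding c_def using assms(1-4)
    by (intro eq_smult_prod_linear_if_roots) (simp_all add: degree_laguerre)
  have "poly ([:0, 1:] * pderiv (pderiv (laguerre n a)) + [:a + 1, -1:] * pderiv (laguerre n a)
      + smult (real n) (laguerre n a)) (z i) = 0"
    by (simp only: laguerre_ode poly_0)
  moreover have "poly ?q (z i) = 0"
    using assms(1,5) by (auto simp: poly_prod)
  ultimately have
    "c * (z i * poly (pderiv (pderiv ?q)) (z i) + (a + 1 - z i) * poly (pderiv ?q) (z i)) = 0"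
    using assms(4,5) unfolding factor by (simp add: pderiv_smult algebra_simps)
  with \<open>c \<noteq> 0\<close>
  have "z i * poly (pderiv (pderiv ?q)) (z i) + (a + 1 - z i) * poly (pderiv ?q) (z i) = 0"
    by simp
  then have
    "poly (pderiv ?q) (z i) * (2 * z i * (\<Sum>l\<in>A - {i}. 1 / (z i - z l)) - (z i - (a + 1))) = 0"
    using poly_pderiv_prod_linear_at_root(1)[OF assms(1,2,5)] by (simp add: algebra_simps)
  then show ?thesis
    using poly_pderiv_prod_linear_at_root(2)[OF assms(1,2,5)] by simp
qed

section \<open>Rows of S\<close>

lemma square_diff_mult_weighted_power_sum:
  fixes x y :: "'a::comm_ring_1"
  shows "(x - y)^2 * (\<Sum>p<k. of_nat (Suc p) * x ^ p * y ^ (k - 1 - p))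
           = of_nat k * x ^ k * (x - y) - y * (x ^ k - y ^ k)"
proof (induction k)
  case (Suc k)
  let ?T = "\<Sum>p<k. of_nat (Suc p) * x ^ p * y ^ (k - 1 - p)"
  have shift: "y ^ (k - p) = y * y ^ (k - 1 - p)" if "p < k" for p
  proof -
    from that have "k - p = Suc (k - 1 - p)" by arith
    then show ?thesis by simp
  qed
  have "(\<Sum>p<Suc k. of_nat (Suc p) * x ^ p * y ^ (Suc k - 1 - p))
      = y * ?T + of_nat (Suc k) * x ^ k"
    by (auto simp: sum_distrib_left shift algebra_simps intro!: sum.cong)
  then have "(x - y)^2 * (\<Sum>p<Suc k. of_nat (Suc p) * x ^ p * y ^ (Suc k - 1 - p))
      = y * ((x - y)^2 * ?T) + of_nat (Suc k) * x ^ k * (x - y)^2"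
    by (simp add: algebra_simps)
  also have "\<dots> = of_nat (Suc k) * x ^ Suc k * (x - y) - y * (x ^ Suc k - y ^ Suc k)"
    unfolding Suc.IH by (simp add: algebra_simps power2_eq_square)
  finally show ?case .
qed simp

lemma power_quotient_partial_fraction:
  fixes x y :: "'a::field"
  assumes "x \<noteq> y"
  shows "2 * ((x + y) / (x - y)^2) * x ^ k - 4 * y ^ Suc k / (x - y)^2
           = 2 * of_nat (2 * k + 1) * x ^ k / (x - y)
             - 4 * (\<Sum>p<k. of_nat (Suc p) * x ^ p * y ^ (k - 1 - p))"
proof -
  let ?T = "\<Sum>p<k. of_nat (Suc p) * x ^ p * y ^ (k - 1 - p)"
  have cancel: "2 * ((c * d - 2 * (d^2 * t)) / d^2) = 2 * c / d - 4 * t"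
    if "d \<noteq> 0" for c d t :: 'a
    using that by (simp add: field_simps power2_eq_square)
  have "(x + y) * x ^ k - 2 * y ^ Suc k
      = of_nat (2 * k + 1) * x ^ k * (x - y) - 2 * ((x - y)^2 * ?T)"
    unfolding square_diff_mult_weighted_power_sum by (simp add: algebra_simps)
  moreover have "2 * ((x + y) / (x - y)^2) * x ^ k - 4 * y ^ Suc k / (x - y)^2
      = 2 * (((x + y) * x ^ k - 2 * y ^ Suc k) / (x - y)^2)"
    by (simp add: diff_divide_distrib algebra_simps)
  ultimately show ?thesis
    using cancel[of "x - y"] assms by simp
qed

lemma stieltjes_power_row:
  fixes x \<nu> :: real and w :: "'b \<Rightarrow> real"
  assumes "finite A" and "x \<noteq> 0" and "\<And>l. l \<in> A \<Longrightarrow> w l \<noteq> x"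
    and stieltjes: "2 * x * (\<Sum>l\<in>A. 1 / (x - w l)) = x - \<nu>"
  shows "(1 + \<nu> / x) * x ^ k
      + (\<Sum>l\<in>A. 2 * ((x + w l) / (x - w l)^2) * x ^ k - 4 * w l ^ Suc k / (x - w l)^2)
    = (2 * real k + 2) * x ^ k - 2 * real k * \<nu> * x ^ (k - 1)
      - 4 * (\<Sum>p<k. real (Suc p) * x ^ p * (\<Sum>l\<in>A. w l ^ (k - 1 - p)))"
proof -
  let ?W = "\<Sum>p<k. real (Suc p) * x ^ p * (\<Sum>l\<in>A. w l ^ (k - 1 - p))"
  have "(\<Sum>l\<in>A. 2 * ((x + w l) / (x - w l)^2) * x ^ k - 4 * w l ^ Suc k / (x - w l)^2)
      = (\<Sum>l\<in>A. 2 * real (2 * k + 1) * x ^ k / (x - w l)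
                 - 4 * (\<Sum>p<k. real (Suc p) * x ^ p * w l ^ (k - 1 - p)))"
    using assms(3) by (intro sum.cong refl power_quotient_partial_fraction) auto
  also have "\<dots> = real (2 * k + 1) * x ^ k * (2 * (\<Sum>l\<in>A. 1 / (x - w l)))
      - 4 * (\<Sum>l\<in>A. \<Sum>p<k. real (Suc p) * x ^ p * w l ^ (k - 1 - p))"
    by (simp add: sum_subtractf sum_distrib_left mult_ac)
  also have "(\<Sum>l\<in>A. \<Sum>p<k. real (Suc p) * x ^ p * w l ^ (k - 1 - p)) = ?W"
    by (subst sum.swap) (simp add: sum_distrib_left)
  also have "2 * (\<Sum>l\<in>A. 1 / (x - w l)) = (x - \<nu>) / x"
    using stieltjes assms(2) by (simp add: field_simps)
  finally have "(1 + \<nu> / x) * x ^ k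
      + (\<Sum>l\<in>A. 2 * ((x + w l) / (x - w l)^2) * x ^ k - 4 * w l ^ Suc k / (x - w l)^2)
      = ((1 + \<nu> / x) * x ^ k + real (2 * k + 1) * x ^ k * ((x - \<nu>) / x)) - 4 * ?W"
    by simp
  also have "(1 + \<nu> / x) * x ^ k + real (2 * k + 1) * x ^ k * ((x - \<nu>) / x)
      = (2 * real k + 2) * x ^ k - 2 * real k * \<nu> * x ^ (k - 1)"
    using assms(2) by (cases k) (simp_all add: field_simps)
  finally show ?thesis .
qed

lemma inverse_square_sum_diff:
  fixes a b x y :: real
  assumes "a^2 = 2 * x" and "b^2 = 2 * y" and "x \<noteq> y"
  shows "1 / (a - b)^2 + 1 / (a + b)^2 = (x + y) / (x - y)^2"
    and "(2 / (a + b)^2 - 2 / (a - b)^2) * b = - 4 * a * y / (x - y)^2"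
proof -
  have prod_eq: "(a - b) * (a + b) = 2 * (x - y)"
    using assms(1,2) by (simp add: algebra_simps power2_eq_square)
  then have "a - b \<noteq> 0" and "a + b \<noteq> 0"
    using assms(3) by auto
  have split_sum: "1 / d^2 + 1 / s^2 = (d^2 + s^2) / (d * s)^2"
    and split_diff: "1 / s^2 - 1 / d^2 = (d^2 - s^2) / (d * s)^2"
    if "d \<noteq> 0" and "s \<noteq> 0" for d s :: real
    using that by (simp_all add: field_simps power2_eq_square)
  have sum_sq: "(a - b)^2 + (a + b)^2 = 4 * (x + y)"
    and diff_sq: "(a - b)^2 - (a + b)^2 = - 4 * a * b"
    using assms(1,2) by (simp_all add: algebra_simps power2_eq_square)
  have cancel: "4 * u / (2 * v)^2 = u / v^2" for u v :: real
    by (simp add: power_mult_distrib)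
  have "1 / (a - b)^2 + 1 / (a + b)^2 = ((a - b)^2 + (a + b)^2) / ((a - b) * (a + b))^2"
    by (rule split_sum) fact+
  also have "\<dots> = (x + y) / (x - y)^2"
    unfolding sum_sq prod_eq by (rule cancel)
  finally show "1 / (a - b)^2 + 1 / (a + b)^2 = (x + y) / (x - y)^2" .
  have y: "y = b^2 / 2"
    using assms(2) by simp
  have cancel_diff: "2 * b * (- 4 * a * b / (2 * v)^2) = - 4 * a * y / v^2" for v :: real
    by (cases "v = 0") (simp_all add: y field_simps power2_eq_square)
  have "(2 / (a + b)^2 - 2 / (a - b)^2) * b = 2 * b * (1 / (a + b)^2 - 1 / (a - b)^2)"
    by (simp add: algebra_simps)
  also have "1 / (a + b)^2 - 1 / (a - b)^2 = ((a - b)^2 - (a + b)^2) / ((a - b) * (a + b))^2"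
    by (rule split_diff) fact+
  also have "2 * b * \<dots> = - 4 * a * y / (x - y)^2"
    unfolding diff_sq prod_eq by (rule cancel_diff)
  finally show "(2 / (a + b)^2 - 2 / (a - b)^2) * b = - 4 * a * y / (x - y)^2" .
qed

lemma S_mat_diag:
  fixes z :: "nat \<Rightarrow> real"
  assumes inj: "inj_on z {0..<N}" and pos: "\<And>j. j < N \<Longrightarrow> 0 < z j" and "i < N"
  shows "S_mat N \<nu> z $$ (i, i)
    = 1 + \<nu> / z i + 2 * (\<Sum>l\<in>{0..<N} - {i}. (z i + z l) / (z i - z l)^2)"
proof -
  let ?r = "\<lambda>l. sqrt (2 * z l)"
  have sq: "?r l ^ 2 = 2 * z l" if "l < N" for l
    using pos[OF that] by simp
  have "1 / (?r i - ?r l)^2 + 1 / (?r i + ?r l)^2 = (z i + z l) / (z i - z l)^2"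
    if "l \<in> {0..<N} - {i}" for l
    using that assms(3) inj by (intro inverse_square_sum_diff(1) sq) (auto dest: inj_onD)
  then have "(\<Sum>l\<in>{0..<N} - {i}. 1 / (?r i - ?r l)^2) + (\<Sum>l\<in>{0..<N} - {i}. 1 / (?r i + ?r l)^2)
      = (\<Sum>l\<in>{0..<N} - {i}. (z i + z l) / (z i - z l)^2)"
    by (simp add: sum.distrib[symmetric])
  moreover have "2 * \<nu> / (?r i)^2 = \<nu> / z i"
    using sq[OF assms(3)] pos[OF assms(3)] by simp
  ultimately show ?thesis
    using assms(3) by (simp add: S_mat_def Let_def algebra_simps)
qed

lemma S_mat_offdiag_scaled:
  fixes z :: "nat \<Rightarrow> real"
  assumes inj: "inj_on z {0..<N}" and pos: "\<And>j. j < N \<Longrightarrow> 0 < z j"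
    and "i < N" and "j < N" and "i \<noteq> j"
  shows "S_mat N \<nu> z $$ (i, j) * sqrt (2 * z j) = - 4 * sqrt (2 * z i) * z j / (z i - z j)^2"
proof -
  have "z i \<noteq> z j"
    using assms(3-5) inj by (auto dest: inj_onD)
  then have "(2 / (sqrt (2 * z i) + sqrt (2 * z j))^2 - 2 / (sqrt (2 * z i) - sqrt (2 * z j))^2)
      * sqrt (2 * z j) = - 4 * sqrt (2 * z i) * z j / (z i - z j)^2"
    using pos[OF assms(3)] pos[OF assms(4)] by (intro inverse_square_sum_diff(2)) simp_all
  with assms(3-5) show ?thesis
    by (simp add: S_mat_def Let_def)
qed

text \<open>
  S maps the column (r_j z_j^k)_j to (r_j Q(z_j))_j, where Q = intertwining_poly nu P k and
  P b = sum_j z_j^b are the power sums of the z_j.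
\<close>
definition intertwining_poly :: "real \<Rightarrow> (nat \<Rightarrow> real) \<Rightarrow> nat \<Rightarrow> real poly" where
  "intertwining_poly \<nu> P k = monom (2 * real k + 2) k - monom (2 * real k * \<nu>) (k - 1)
     - smult 4 (\<Sum>p<k. monom (real (Suc p) * P (k - 1 - p)) p - monom (real (Suc p)) (k - 1))"

lemma coeff_intertwining_poly:
  "k \<le> m \<Longrightarrow> coeff (intertwining_poly \<nu> P k) m = (if m = k then 2 * real k + 2 else 0)"
  by (cases k) (auto simp: intertwining_poly_def coeff_monom coeff_sum intro!: sum.neutral)

lemma degree_intertwining_poly: "degree (intertwining_poly \<nu> P k) \<le> k"
  by (rule degree_le) (simp add: coeff_intertwining_poly)

lemma poly_intertwining_poly:
  "poly (intertwining_poly \<nu> P k) x = (2 * real k + 2) * x ^ k - 2 * real k * \<nu> * x ^ (k - 1)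
     - 4 * (\<Sum>p<k. real (Suc p) * x ^ p * (P (k - 1 - p) - x ^ (k - 1 - p)))"
proof -
  have "poly (monom (real (Suc p) * P (k - 1 - p)) p - monom (real (Suc p)) (k - 1)) x
      = real (Suc p) * x ^ p * (P (k - 1 - p) - x ^ (k - 1 - p))" if "p < k" for p
  proof -
    from that have "x ^ (k - 1) = x ^ p * x ^ (k - 1 - p)"
      by (simp flip: power_add)
    then show ?thesis
      by (simp add: poly_monom algebra_simps)
  qed
  then have "poly (\<Sum>p<k. monom (real (Suc p) * P (k - 1 - p)) p - monom (real (Suc p)) (k - 1)) x
      = (\<Sum>p<k. real (Suc p) * x ^ p * (P (k - 1 - p) - x ^ (k - 1 - p)))"
    unfolding poly_sum by (intro sum.cong) simp_all
  then show ?thesis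
    by (simp only: intertwining_poly_def poly_diff poly_smult poly_monom)
qed

lemma S_mat_row_power:
  fixes z :: "nat \<Rightarrow> real"
  assumes inj: "inj_on z {0..<N}" and pos: "\<And>j. j < N \<Longrightarrow> 0 < z j" and "i < N"
    and stieltjes: "2 * z i * (\<Sum>l\<in>{0..<N} - {i}. 1 / (z i - z l)) = z i - \<nu>"
  shows "(\<Sum>j = 0..<N. S_mat N \<nu> z $$ (i, j) * (sqrt (2 * z j) * z j ^ k))
    = sqrt (2 * z i) * poly (intertwining_poly \<nu> (\<lambda>b. \<Sum>j = 0..<N. z j ^ b) k) (z i)"
proof -
  let ?A = "{0..<N} - {i}" and ?r = "\<lambda>l. sqrt (2 * z l)" and ?S = "S_mat N \<nu> z"
  have off: "?S $$ (i, l) * (?r l * z l ^ k) = - (?r i * (4 * z l ^ Suc k / (z i - z l)^2))"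
    if "l \<in> ?A" for l
  proof -
    have "?S $$ (i, l) * ?r l = - 4 * ?r i * z l / (z i - z l)^2"
      using that assms(3) by (intro S_mat_offdiag_scaled inj pos) auto
    then have "(?S $$ (i, l) * ?r l) * z l ^ k = - 4 * ?r i * z l / (z i - z l)^2 * z l ^ k"
      by simp
    then show ?thesis
      by (simp add: mult_ac)
  qed
  have split: "(\<Sum>l\<in>?A. 2 * ((z i + z l) / (z i - z l)^2) * z i ^ k - 4 * z l ^ Suc k / (z i - z l)^2)
      = 2 * (\<Sum>l\<in>?A. (z i + z l) / (z i - z l)^2) * z i ^ k
        - (\<Sum>l\<in>?A. 4 * z l ^ Suc k / (z i - z l)^2)"
    by (simp add: sum_subtractf sum_distrib_left sum_distrib_right)
  have "(\<Sum>j = 0..<N. ?S $$ (i, j) * (?r j * z j ^ k))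
      = ?S $$ (i, i) * (?r i * z i ^ k) + (\<Sum>l\<in>?A. ?S $$ (i, l) * (?r l * z l ^ k))"
    using assms(3) by (simp add: sum.remove)
  also have "(\<Sum>l\<in>?A. ?S $$ (i, l) * (?r l * z l ^ k))
      = - (?r i * (\<Sum>l\<in>?A. 4 * z l ^ Suc k / (z i - z l)^2))"
    using off by (simp add: sum_negf sum_distrib_left)
  also have "?S $$ (i, i) * (?r i * z i ^ k) + - (?r i * (\<Sum>l\<in>?A. 4 * z l ^ Suc k / (z i - z l)^2))
      = ?r i * ((1 + \<nu> / z i) * z i ^ k
          + (\<Sum>l\<in>?A. 2 * ((z i + z l) / (z i - z l)^2) * z i ^ k - 4 * z l ^ Suc k / (z i - z l)^2))"
    unfolding split by (simp add: S_mat_diag[OF inj pos assms(3)] algebra_simps)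
  also have "(1 + \<nu> / z i) * z i ^ k
          + (\<Sum>l\<in>?A. 2 * ((z i + z l) / (z i - z l)^2) * z i ^ k - 4 * z l ^ Suc k / (z i - z l)^2)
      = (2 * real k + 2) * z i ^ k - 2 * real k * \<nu> * z i ^ (k - 1)
          - 4 * (\<Sum>p<k. real (Suc p) * z i ^ p * (\<Sum>l\<in>?A. z l ^ (k - 1 - p)))"
    using pos[OF assms(3)] inj assms(3) stieltjes
    by (intro stieltjes_power_row) (auto dest: inj_onD)
  also have "\<dots> = poly (intertwining_poly \<nu> (\<lambda>b. \<Sum>j = 0..<N. z j ^ b) k) (z i)"
    using assms(3) by (simp add: poly_intertwining_poly sum_diff1)
  finally show ?thesis .
qed

section \<open>The determinant\<close>

lemma poly_eq_sum_lessThan: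
  fixes p :: "'a::{comm_semiring_0,semiring_1} poly"
  assumes "degree p < n"
  shows "poly p x = (\<Sum>m<n. coeff p m * x ^ m)"
proof -
  have "poly p x = (\<Sum>m\<le>degree p. coeff p m * x ^ m)"
    by (rule poly_altdef)
  also have "\<dots> = (\<Sum>m<n. coeff p m * x ^ m)"
    using assms by (intro sum.mono_neutral_left) (auto simp: coeff_eq_0)
  finally show ?thesis .
qed

lemma S_mat_mult_eq:
  fixes z :: "nat \<Rightarrow> real"
  assumes inj: "inj_on z {0..<N}" and pos: "\<And>j. j < N \<Longrightarrow> 0 < z j"
    and stieltjes: "\<And>i. i < N \<Longrightarrow> 2 * z i * (\<Sum>l\<in>{0..<N} - {i}. 1 / (z i - z l)) = z i - \<nu>"
  shows "S_mat N \<nu> z * mat N N (\<lambda>(i, k). sqrt (2 * z i) * z i ^ k)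
    = mat N N (\<lambda>(i, k). sqrt (2 * z i) * z i ^ k)
      * mat N N (\<lambda>(m, k). coeff (intertwining_poly \<nu> (\<lambda>b. \<Sum>j = 0..<N. z j ^ b) k) m)"
    (is "?S * ?X = ?X * ?B")
proof (rule eq_matI)
  fix i k
  assume "i < dim_row (?X * ?B)" and "k < dim_col (?X * ?B)"
  then have i: "i < N" and k: "k < N"
    by simp_all
  let ?Q = "intertwining_poly \<nu> (\<lambda>b. \<Sum>j = 0..<N. z j ^ b) k"
  have "(?S * ?X) $$ (i, k) = (\<Sum>j = 0..<N. ?S $$ (i, j) * (sqrt (2 * z j) * z j ^ k))"
    using i k by (simp add: S_mat_def Let_def scalar_prod_def)
  also have "\<dots> = sqrt (2 * z i) * poly ?Q (z i)"
    using i by (intro S_mat_row_power inj pos stieltjes)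
  also have "poly ?Q (z i) = (\<Sum>m<N. coeff ?Q m * z i ^ m)"
    by (intro poly_eq_sum_lessThan le_less_trans[OF degree_intertwining_poly k])
  also have "sqrt (2 * z i) * \<dots> = (?X * ?B) $$ (i, k)"
    using i k by (simp add: scalar_prod_def sum_distrib_left lessThan_atLeast0 algebra_simps)
  finally show "(?S * ?X) $$ (i, k) = (?X * ?B) $$ (i, k)" .
qed (simp_all add: S_mat_def Let_def)

lemma det_scaled_vandermonde_neq_0:
  fixes z c :: "nat \<Rightarrow> 'a::field"
  assumes "inj_on z {0..<n}" and "\<And>i. i < n \<Longrightarrow> c i \<noteq> 0"
  shows "det (mat n n (\<lambda>(i, k). c i * z i ^ k)) \<noteq> 0"
proof
  let ?X = "mat n n (\<lambda>(i, k). c i * z i ^ k)"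
  assume "det ?X = 0"
  then obtain v where v: "v \<in> carrier_vec n" "v \<noteq> 0\<^sub>v n" "?X *\<^sub>v v = 0\<^sub>v n"
    using det_0_iff_vec_prod_zero_field[of ?X n] by auto
  from v(1,2) obtain m where m: "m < n" "v $ m \<noteq> 0"
    by (metis eq_vecI carrier_vecD index_zero_vec)
  define q where "q = (\<Sum>k<n. monom (v $ k) k)"
  have coeff_q: "coeff q k = (if k < n then v $ k else 0)" for k
    by (simp add: q_def coeff_sum coeff_monom)
  have "q \<noteq> 0"
    using m coeff_q[of m] by auto
  then have "coeff q (degree q) \<noteq> 0"
    by simp
  then have "degree q < n"
    using coeff_q[of "degree q"] by (auto split: if_splits)
  have "poly q (z i) = 0" if "i < n" for i
  proof -
    have "(?X *\<^sub>v v) $ i = (\<Sum>k = 0..<n. c i * z i ^ k * v $ k)"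
      using that v(1) by (simp add: scalar_prod_def)
    also have "\<dots> = c i * poly q (z i)"
      by (simp add: q_def poly_sum poly_monom sum_distrib_left lessThan_atLeast0 mult_ac)
    finally show ?thesis
      using v(3) that assms(2) by simp
  qed
  then have "q = 0"
    using assms(1) \<open>degree q < n\<close>
    by (intro poly_eqI_degree[of "z ` {0..<n}"]) (auto simp: card_image)
  with \<open>q \<noteq> 0\<close> show False
    by contradiction
qed

lemma det_eq_if_intertwined:
  fixes A B X :: "'a::idom mat"
  assumes "A \<in> carrier_mat n n" and "B \<in> carrier_mat n n" and "X \<in> carrier_mat n n"
    and "A * X = X * B" and "det X \<noteq> 0"
  shows "det A = det B"
proof -
  have "det A * det X = det (X * B)"
    using det_mult[OF assms(1,3)] assms(4) by simp
  also have "\<dots> = det X * det B"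
    by (rule det_mult[OF assms(3,2)])
  finally have "det X * det A = det X * det B"
    by (metis mult.commute)
  with assms(5) show ?thesis
    by simp
qed

lemma prod_double_Suc: "(\<Prod>k = 0..<n. 2 * real k + 2) = fact n * 2 ^ n"
  by (induction n) (simp_all add: algebra_simps)

lemma det_S_mat_if_stieltjes:
  fixes z :: "nat \<Rightarrow> real"
  assumes inj: "inj_on z {0..<N}" and pos: "\<And>j. j < N \<Longrightarrow> 0 < z j"
    and stieltjes: "\<And>i. i < N \<Longrightarrow> 2 * z i * (\<Sum>l\<in>{0..<N} - {i}. 1 / (z i - z l)) = z i - \<nu>"
  shows "det (S_mat N \<nu> z) = fact N * 2 ^ N"
proof -
  define X where "X = mat N N (\<lambda>(i, k). sqrt (2 * z i) * z i ^ k)"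
  define B where "B = mat N N (\<lambda>(m, k). coeff (intertwining_poly \<nu> (\<lambda>b. \<Sum>j = 0..<N. z j ^ b) k) m)"
  have B: "B \<in> carrier_mat N N"
    by (simp add: B_def)
  have upper: "upper_triangular B"
    by (auto simp: upper_triangular_def B_def coeff_intertwining_poly)
  have "det (S_mat N \<nu> z) = det B"
  proof (rule det_eq_if_intertwined[where n = N])
    show "S_mat N \<nu> z * X = X * B"
      unfolding X_def B_def using inj pos stieltjes by (rule S_mat_mult_eq)
    show "det X \<noteq> 0"
      unfolding X_def using inj by (intro det_scaled_vandermonde_neq_0) (auto dest: pos)
  qed (simp_all add: B X_def S_mat_def Let_def)
  also have "det B = (\<Prod>k = 0..<N. B $$ (k, k))"
    using det_upper_triangular[OF upper B] B by (simp add: prod_list_diag_prod)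
  also have "\<dots> = (\<Prod>k = 0..<N. 2 * real k + 2)"
    by (simp add: B_def coeff_intertwining_poly)
  finally show ?thesis
    by (simp add: prod_double_Suc)
qed

theorem corollary3p4:
  fixes N :: nat and \<nu> :: real and z :: "nat \<Rightarrow> real"
  assumes "\<nu> > 0"
    and "\<And>i j. i < j \<Longrightarrow> j < N \<Longrightarrow> z i > z j"
    and "\<And>i. i < N \<Longrightarrow> z i > 0"
    and "{x. poly (laguerre N (\<nu> - 1)) x = 0} = z ` {0..<N}"
  shows "det (S_mat N \<nu> z) = fact N * 2 ^ N"
proof -
  \<comment> \<open>The hypothesis nu > 0 only guarantees the assumed properties of the zeros.\<close>
  have inj: "inj_on z {0..<N}"
    by (rule inj_onI) (metis assms(2) atLeastLessThan_iff less_irrefl linorder_neqE_nat)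
  have roots: "poly (laguerre N (\<nu> - 1)) (z l) = 0" if "l \<in> {0..<N}" for l
    using assms(4) that by blast
  have "2 * z i * (\<Sum>l\<in>{0..<N} - {i}. 1 / (z i - z l)) = z i - \<nu>" if "i < N" for i
    using laguerre_roots_stieltjes[of "{0..<N}" z N "\<nu> - 1" i] inj roots that by simp
  with inj assms(3) show ?thesis
    by (rule det_S_mat_if_stieltjes)
qed

end
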